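(* Let $P_S,H_{SR},H_{SD},H_{RD},\sigma_a^2,\sigma_b^2>0$, $\eta\in(0,1]$, assume $\sigma_R^2=\sigma_D^2=\sigma_a^2+\sigma_b^2$ and $H_{SR}>H_{SD}$, and let $\rho^{\mathrm{th}}=1-\frac{H_{SD}\sigma_b^2}{H_{SR}\sigma_D^2-H_{SD}\sigma_a^2}$. Fix $\rho\in(0,\rho^{\mathrm{th}})$ and set $C^{(PS)}_{SR}=\log\big(1+\frac{(1-\rho)P_SH_{SR}}{(1-\rho)\sigma_a^2+\sigma_b^2}\big)$, $m=P_SH_{SD}/\sigma_D^2$, $b=C_{SD}=\log(1+m)$, $a'=C^{(PS)}_{SR}-C_{SD}$, $c'=\eta\rho H_{SR}H_{RD}P_S/\sigma_D^2$. Then the problem $$\max_{\lambda\in(0,1)}\min\Big\{\lambda C^{(PS)}_{SR},\ \lambda b+(1-\lambda)\log\Big(1+m+\frac{c'\lambda}{1-\lambda}\Big)\Big\}$$ is solved by $\lambda^*=\max\{\lambda_1,\lambda_2\}$, where $$\lambda_1=\frac{-\frac1{a'}\mathcal W_{-1}\!\big(-\frac{a'}{c'}e^{-\frac{a'(1+m)}{c'}}\big)-\frac{1+m}{c'}}{1-\frac1{a'}\mathcal W_{-1}\!\big(-\frac{a'}{c'}e^{-\frac{a'(1+m)}{c'}}\big)-\frac{1+m}{c'}},\qquad \lambda_2=\frac{e^{\mathcal W_0\left(\frac{c'-(1+m)}{e^{1+b}}\right)+b+1}-(1+m)}{e^{\mathcal W_0\left(\frac{c'-(1+m)}{e^{1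+b}}\right)+b+1}+c'-(1+m)}.$$
   Context: $\log$ is the natural logarithm; $\mathcal W_0,\mathcal W_{-1}$ are the principal and lower real branches of the Lambert W function. This is the power-splitting relay protocol with energy accumulation (maximal ratio combining) at the destination for fixed power-splitting ratio $\rho$, with relay forwarding power $\eta\rho H_{SR}P_S\lambda/(1-\lambda)$. *)

theory Defs
  imports Complex_Main
begin

text \<open>The principal branch W0 is the solution w with w \<ge> -1 (defined for y \<ge> -1/e);
  the lower branch Wm1 is the solution w with w \<le> -1 (defined for -1/e \<le> y < 0).\<close>

definition lambertW0 :: "real \<Rightarrow> real" where
  "lambertW0 y = (THE w. w \<ge> -1 \<and> w * exp w = y)"

definition lambertWm1 :: "real \<Rightarrow> real" where
  "lambertWm1 y = (THE w. w \<le> -1 \<and> w * exp w = y)"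

end

theory Submission
  imports Defs
begin

text \<open>With \<open>t = \<lambda>/(1 - \<lambda>)\<close> the relay rate minus the source-relay rate is
  \<open>(1 - \<lambda>)(ln (1 + m + c't) - a't)\<close>. The bracket is concave in \<open>t\<close> and positive at \<open>t = 0\<close>,
  so it has a single zero \<open>t\<^sub>1\<close>, beyond which the relay rate is the smaller one; at that zero
  \<open>w = -a'(1 + m + c't\<^sub>1)/c' \<le> -1\<close> solves \<open>w e\<^sup>w = -(a'/c') e\<^bsup>-a'(1+m)/c'\<^esup>\<close>, which gives \<open>\<lambda>\<^sub>1\<close>
  through \<open>W\<^sub>-\<^sub>1\<close>. The relay rate itself is concave in \<open>\<lambda>\<close>, and its derivative vanishes exactly
  where \<open>1 + m + c'\<lambda>/(1 - \<lambda>)\<close> reaches the root \<open>E\<close> of \<open>ln E + (1 + m - c')/E = b + 1\<close>,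
  which \<open>W\<^sub>0\<close> solves; that is \<open>\<lambda>\<^sub>2\<close>. The minimum of an increasing line and such a unimodal
  function is maximal at the crossing \<open>\<lambda>\<^sub>1\<close> when the peak \<open>\<lambda>\<^sub>2\<close> lies before it, and at the
  peak otherwise.\<close>

lemma has_real_derivative_mult_exp:
  "((\<lambda>w. w * exp w) has_real_derivative (1 + x) * exp x) (at x)"
  by (rule derivative_eq_intros refl | simp add: algebra_simps)+

lemma mult_exp_strict_mono_on: "strict_mono_on {-1..} (\<lambda>w::real. w * exp w)"
proof (rule strict_mono_onI)
  fix r s :: real assume "r \<in> {-1..}" "r < s"
  show "r * exp r < s * exp s"
  proof (rule DERIV_pos_imp_increasing_open[OF \<open>r < s\<close>])
    fix x assume "r < x" "x < s"
    then have "0 < (1 + x) * exp x" using \<open>r \<in> {-1..}\<close> by simp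
    then show "\<exists>y. ((\<lambda>w. w * exp w) has_real_derivative y) (at x) \<and> 0 < y"
      using has_real_derivative_mult_exp by blast
  qed (intro continuous_intros)
qed

lemma mult_exp_strict_antimono_on: "strict_antimono_on {..-1} (\<lambda>w::real. w * exp w)"
proof (rule monotone_onI)
  fix r s :: real assume "r \<in> {..-1}" "s \<in> {..-1}" "r < s"
  show "s * exp s < r * exp r"
  proof (rule DERIV_neg_imp_decreasing_open[OF \<open>r < s\<close>])
    fix x assume "r < x" "x < s"
    then have "(1 + x) * exp x < 0" using \<open>s \<in> {..-1}\<close> by (simp add: mult_neg_pos)
    then show "\<exists>y. ((\<lambda>w. w * exp w) has_real_derivative y) (at x) \<and> y < 0"
      using has_real_derivative_mult_exp by blast
  qed (intro continuous_intros)
qed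

lemma lambertW0_eqI: "-1 \<le> w \<Longrightarrow> lambertW0 (w * exp w) = w"
  unfolding lambertW0_def
  by (rule the_equality) (auto dest: inj_onD[OF strict_mono_on_imp_inj_on[OF mult_exp_strict_mono_on]])

lemma lambertWm1_eqI: "w \<le> -1 \<Longrightarrow> lambertWm1 (w * exp w) = w"
  unfolding lambertWm1_def
  by (rule the_equality)
    (use mult_exp_strict_antimono_on in \<open>auto simp: strict_antimono_iff_antimono dest: inj_onD\<close>)

lemma lambertW0_inverse:
  assumes "- exp (-1) < z"
  shows "-1 < lambertW0 z" and "lambertW0 z * exp (lambertW0 z) = z"
proof -
  define M where "M = max z 0"
  have "z \<le> M * exp M"
  proof (cases "z \<ge> 0")
    case True
    then have "z * 1 \<le> z * exp z" by (intro mult_left_mono) auto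
    then show ?thesis using True M_def by simp
  qed (simp add: M_def)
  moreover have "(-1) * exp (-1) \<le> z" "-1 \<le> M" using assms M_def by auto
  ultimately obtain w where w: "-1 \<le> w" "w * exp w = z"
    using IVT[of "\<lambda>w. w * exp w" "-1" z M] by (auto intro!: continuous_intros)
  with assms have "w \<noteq> -1" by auto
  with w lambertW0_eqI[of w] show "-1 < lambertW0 z" "lambertW0 z * exp (lambertW0 z) = z"
    by auto
qed

lemma lambertWm1_at_crossing:
  fixes A a c t :: real
  assumes "0 < c" "0 < A + c * t" "ln (A + c * t) = a * t" "c < a * (A + c * t)"
  shows "lambertWm1 (- (a / c) * exp (- (a * A / c))) = - (a * (A + c * t) / c)"
proof -
  define w where "w = - (a * (A + c * t) / c)"
  have "w = - (a * A / c) - ln (A + c * t)"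
    using assms(1,3) by (simp add: w_def field_simps)
  then have "exp w = exp (- (a * A / c)) / (A + c * t)"
    using assms(2) by (simp add: exp_diff)
  then have "w * exp w = - (a / c) * exp (- (a * A / c))"
    using assms(1,2) by (simp add: w_def)
  moreover have "w \<le> -1" using assms(1,4) by (simp add: w_def field_simps)
  ultimately show ?thesis using lambertWm1_eqI[of w] w_def by metis
qed

lemma lambertW0_solves_ln_add_divide:
  fixes A c :: real
  assumes "0 < A" "0 < c" and E_def: "E = exp (lambertW0 ((c - A) / exp (1 + ln A)) + ln A + 1)"
  shows "A < E" and "ln E + (A - c) / E = ln A + 1"
proof -
  define z where "z = (c - A) / exp (1 + ln A)"
  define W where "W = lambertW0 z"
  have expA: "exp (1 + ln A) = exp 1 * A" using assms by (simp add: exp_add)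
  have "- exp (-1) = - A / (exp 1 * A)" using assms by (simp add: exp_minus inverse_eq_divide)
  also have "\<dots> < z" unfolding z_def expA using assms by (intro divide_strict_right_mono) auto
  finally have W: "-1 < W" "W * exp W = z" using lambertW0_inverse by (auto simp: W_def)
  have E: "E = exp (1 + ln A) * exp W" by (simp add: E_def W_def z_def exp_add[symmetric] ac_simps)
  have "1 < exp 1 * exp W" using W(1) by (simp add: exp_add[symmetric])
  then show "A < E" using assms(1) unfolding E expA by simp
  have "(c - A) / E = W" using W(2) by (simp add: E z_def field_simps)
  then have "(A - c) / E = - W" by (metis minus_diff_eq minus_divide_left)
  moreover have "ln E = W + ln A + 1" by (simp add: E_def W_def z_def)
  ultimately show "ln E + (A - c) / E = ln A + 1" by simp
qed

lemma divide_one_minus_mono: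
  fixes x y :: real
  assumes "x \<le> y" "y < 1"
  shows "x / (1 - x) \<le> y / (1 - y)"
proof -
  have "1 / (1 - x) \<le> 1 / (1 - y)" using assms by (intro divide_left_mono) auto
  moreover have "z / (1 - z) = 1 / (1 - z) - 1" if "z < 1" for z :: real
    using that by (simp add: field_simps)
  ultimately show ?thesis using assms by simp
qed

lemma ln_add_divide_mono:
  fixes K u v :: real
  assumes "0 < u" "u \<le> v" "K \<le> u"
  shows "ln u + K / u \<le> ln v + K / v"
proof -
  have v: "0 < v" using assms by simp
  have "K / u - K / v = K * (v - u) / (u * v)" using assms v by (simp add: field_simps)
  also have "\<dots> \<le> u * (v - u) / (u * v)"
    using assms v by (intro divide_right_mono mult_right_mono) auto
  also have "\<dots> = - ((u - v) / v)" using assms by (simp add: field_simps)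
  also have "\<dots> \<le> ln v - ln u" using ln_diff_le[OF assms(1) v] by simp
  finally show ?thesis by simp
qed

lemma ln_affine_supergradient:
  fixes A c s t :: real
  assumes "0 < A + c * s" "0 < A + c * t"
  shows "ln (A + c * s) \<le> ln (A + c * t) + c / (A + c * t) * (s - t)"
proof -
  have "ln (A + c * s) - ln (A + c * t) \<le> (A + c * s - (A + c * t)) / (A + c * t)"
    using assms by (rule ln_diff_le)
  also have "\<dots> = c / (A + c * t) * (s - t)" by (simp add: algebra_simps)
  finally show ?thesis by simp
qed

lemma ln_affine_less_linear:
  fixes A a c :: real
  assumes "0 < A" "0 < a" "0 < c"
  shows "\<exists>T>0. ln (A + c * T) < a * T"
proof -
  define k where "k = a / (2 * c)"
  define Q where "Q = k * A - 1 - ln k"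
  define T where "T = 2 * (\<bar>Q\<bar> + 1) / a"
  have "k > 0" "T > 0" using assms by (auto simp: k_def T_def)
  have aT: "a * T = 2 * (\<bar>Q\<bar> + 1)" using assms by (simp add: T_def)
  have pos: "A + c * T > 0" using assms \<open>T > 0\<close> by (simp add: add_pos_pos)
  have "ln (A + c * T) = ln (k * (A + c * T)) - ln k" using \<open>k > 0\<close> pos by (simp add: ln_mult_pos)
  also have "\<dots> \<le> k * (A + c * T) - 1 - ln k" using \<open>k > 0\<close> pos by (simp add: ln_le_minus_one)
  also have "\<dots> = Q + a * T / 2" using assms by (simp add: Q_def k_def field_simps)
  also have "\<dots> < a * T"
    unfolding aT by (cases "Q \<ge> 0") (simp_all add: field_simps)
  finally show ?thesis using \<open>T > 0\<close> by blast
qed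

lemma ln_affine_crosses_linear:
  fixes A a c :: real
  assumes "1 < A" "0 < a" "0 < c"
  obtains t where "0 < t" "ln (A + c * t) = a * t" "c < a * (A + c * t)"
    "\<And>s. t \<le> s \<Longrightarrow> ln (A + c * s) \<le> a * s"
proof -
  define phi where "phi s = ln (A + c * s) - a * s" for s
  have pos: "0 < A + c * s" if "0 \<le> s" for s using assms that by (simp add: add_pos_nonneg)
  have phi_tangent: "phi s \<le> phi t + (c / (A + c * t) - a) * (s - t)" if "0 \<le> s" "0 \<le> t" for s t
    using ln_affine_supergradient[OF pos pos, OF that] by (simp add: phi_def algebra_simps)
  obtain T where "T > 0" "phi T < 0"
    using ln_affine_less_linear[of A a c] assms by (auto simp: phi_def)
  moreover have "phi 0 > 0" using assms by (simp add: phi_def)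
  moreover have "isCont phi s" if "0 \<le> s" for s
    using pos[OF that] unfolding phi_def by (auto intro!: continuous_intros)
  ultimately obtain t where t: "0 \<le> t" "phi t = 0"
    using IVT2[of phi T 0 0] by auto
  with \<open>phi 0 > 0\<close> have "0 < t" by (cases "t = 0") auto
  have slope: "c / (A + c * t) - a < 0"
  proof -
    have "0 < phi 0" by fact
    also have "\<dots> \<le> (c / (A + c * t) - a) * (0 - t)" using phi_tangent[of 0 t] t by simp
    finally show ?thesis using \<open>0 < t\<close> by (simp add: mult_less_0_iff)
  qed
  show thesis
  proof
    show "ln (A + c * t) = a * t" using t by (simp add: phi_def)
    show "c < a * (A + c * t)" using slope pos[OF t(1)] by (simp add: field_simps)
    fix s assume "t \<le> s"
    then have "(c / (A + c * t) - a) * (s - t) \<le> 0"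
      using slope by (simp add: mult_nonpos_nonneg)
    then have "phi s \<le> 0" using phi_tangent[of s t] t \<open>t \<le> s\<close> by simp
    then show "ln (A + c * s) \<le> a * s" by (simp add: phi_def)
  qed fact
qed

lemma max_min_linear_unimodal:
  fixes g :: "real \<Rightarrow> real" and C x\<^sub>1 x\<^sub>2 :: real
  assumes "0 \<le> C" "0 < x\<^sub>1" "x\<^sub>1 < 1" "x\<^sub>2 < 1"
    and crossing: "g x\<^sub>1 = x\<^sub>1 * C"
    and below: "\<And>x. x\<^sub>1 \<le> x \<Longrightarrow> x < 1 \<Longrightarrow> g x \<le> x * C"
    and peak: "\<And>y. 0 < y \<Longrightarrow> y < 1 \<Longrightarrow> g y \<le> g x\<^sub>2"
    and decreasing: "\<And>x y. x\<^sub>2 \<le> x \<Longrightarrow> x \<le> y \<Longrightarrow> y < 1 \<Longrightarrow> g y \<le> g x"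
    and "0 < x" "x < 1"
  shows "min (x * C) (g x) \<le> min (max x\<^sub>1 x\<^sub>2 * C) (g (max x\<^sub>1 x\<^sub>2))"
proof (cases "x\<^sub>1 \<le> x\<^sub>2")
  case True
  then have "min (max x\<^sub>1 x\<^sub>2 * C) (g (max x\<^sub>1 x\<^sub>2)) = g x\<^sub>2"
    using below[of x\<^sub>2] assms by simp
  moreover have "min (x * C) (g x) \<le> g x\<^sub>2"
  proof (cases "x \<le> x\<^sub>1")
    case True
    then have "x * C \<le> g x\<^sub>1" using crossing assms by (simp add: mult_right_mono)
    then show ?thesis using peak[of x\<^sub>1] assms by simp
  qed (use peak[of x] assms in simp)
  ultimately show ?thesis by simp
next
  case False
  then have "min (max x\<^sub>1 x\<^sub>2 * C) (g (max x\<^sub>1 x\<^sub>2)) = x\<^sub>1 * C"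
    using crossing by simp
  moreover have "min (x * C) (g x) \<le> x\<^sub>1 * C"
  proof (cases "x \<le> x\<^sub>1")
    case True
    then show ?thesis using assms by (simp add: min.coboundedI1 mult_right_mono)
  next
    case False
    then show ?thesis
      using decreasing[of x\<^sub>1 x] crossing \<open>\<not> x\<^sub>1 \<le> x\<^sub>2\<close> assms
      by (simp add: min.coboundedI2)
  qed
  ultimately show ?thesis by simp
qed

text \<open>Rate at the destination with maximal ratio combining of the direct and the relayed signal,
  with \<open>A = 1 + m\<close> and \<open>c = c'\<close>.\<close>

definition mrc_rate :: "real \<Rightarrow> real \<Rightarrow> real \<Rightarrow> real" where
  "mrc_rate A c x = x * ln A + (1 - x) * ln (A + c * x / (1 - x))"

lemma mrc_rate_minus_linear:
  fixes A C c x :: real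
  assumes "x < 1"
  shows "mrc_rate A c x - x * C = (1 - x) * (ln (A + c * (x / (1 - x))) - (C - ln A) * (x / (1 - x)))"
proof -
  have "(1 - x) * ((C - ln A) * (x / (1 - x))) = (C - ln A) * x" using assms by simp
  then show ?thesis unfolding mrc_rate_def right_diff_distrib by (simp add: algebra_simps)
qed

lemma mrc_rate_supergradient:
  fixes A c u x y :: real
  assumes "0 < A" "0 \<le> c" "0 < x" "x < 1" "0 < y" "y < 1"
    and u_def: "u = A + c * x / (1 - x)"
  shows "mrc_rate A c y \<le> mrc_rate A c x + (ln A + 1 - (ln u + (A - c) / u)) * (y - x)"
  \<comment> \<open>the factor of \<open>y - x\<close> is the derivative of \<open>mrc_rate A c\<close> at \<open>x\<close>\<close>
proof -
  define v where "v = A + c * y / (1 - y)"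
  have u: "0 < u" and v: "0 < v"
    using assms by (auto simp: u_def v_def intro!: add_pos_nonneg)
  have "c / (1 - x) = u - (A - c)"
    using assms(4) unfolding u_def by (simp add: field_simps)
  then have slope: "c / ((1 - x) * u) = 1 - (A - c) / u"
    using u by (simp add: divide_divide_eq_left[symmetric] diff_divide_distrib)
  have "v - u = c * (y - x) / ((1 - x) * (1 - y))"
    unfolding u_def v_def using assms(3-6) by (simp add: field_simps)
  then have "(1 - y) * ((v - u) / u) = c / ((1 - x) * u) * (y - x)"
    using assms(4,6) u by (simp add: divide_simps ac_simps)
  moreover have "(1 - y) * (ln v - ln u) \<le> (1 - y) * ((v - u) / u)"
    using ln_diff_le[OF v u] assms by (intro mult_left_mono) auto
  moreover have "mrc_rate A c y - mrc_rate A c x = (y - x) * (ln A - ln u) + (1 - y) * (ln v - ln u)"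
    by (simp add: mrc_rate_def u_def v_def algebra_simps)
  ultimately show ?thesis unfolding slope by (simp add: algebra_simps)
qed

lemma mrc_rate_crossing_point:
  fixes A C c W x\<^sub>1 :: real
  assumes "1 < A" "ln A < C" "0 < c"
    and W_def: "W = lambertWm1 (- ((C - ln A) / c) * exp (- ((C - ln A) * A / c)))"
    and x\<^sub>1_def: "x\<^sub>1 = (- (1 / (C - ln A)) * W - A / c) / (1 - (1 / (C - ln A)) * W - A / c)"
  shows "0 < x\<^sub>1" "x\<^sub>1 < 1" "mrc_rate A c x\<^sub>1 = x\<^sub>1 * C"
    and "\<And>x. x\<^sub>1 \<le> x \<Longrightarrow> x < 1 \<Longrightarrow> mrc_rate A c x \<le> x * C"
proof -
  define a where "a = C - ln A"
  have "0 < a" using assms by (simp add: a_def)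
  obtain t where t: "0 < t" "ln (A + c * t) = a * t" "c < a * (A + c * t)"
    and beyond: "\<And>s. t \<le> s \<Longrightarrow> ln (A + c * s) \<le> a * s"
    using ln_affine_crosses_linear[OF assms(1) \<open>0 < a\<close> assms(3)] by blast
  have "0 < A + c * t" using assms t by (simp add: add_pos_pos)
  then have "W = - (a * (A + c * t) / c)"
    using lambertWm1_at_crossing[OF assms(3) _ t(2,3)] by (simp add: W_def a_def)
  then have "- (1 / a) * W - A / c = t" using \<open>0 < a\<close> assms(3) by (simp add: field_simps)
  then have x\<^sub>1: "x\<^sub>1 = t / (1 + t)" by (simp add: x\<^sub>1_def a_def[symmetric] algebra_simps)
  show "0 < x\<^sub>1" "x\<^sub>1 < 1" using t by (simp_all add: x\<^sub>1)
  have t_eq: "x\<^sub>1 / (1 - x\<^sub>1) = t" using t by (simp add: x\<^sub>1 field_simps)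
  show "mrc_rate A c x\<^sub>1 = x\<^sub>1 * C"
    using mrc_rate_minus_linear[of x\<^sub>1 A c C] \<open>x\<^sub>1 < 1\<close> t(2) by (simp add: t_eq a_def)
  fix x assume "x\<^sub>1 \<le> x" "x < 1"
  then have "ln (A + c * (x / (1 - x))) - (C - ln A) * (x / (1 - x)) \<le> 0"
    using beyond[of "x / (1 - x)"] divide_one_minus_mono[of x\<^sub>1 x] by (simp add: t_eq a_def)
  then have "(1 - x) * (ln (A + c * (x / (1 - x))) - (C - ln A) * (x / (1 - x))) \<le> 0"
    using \<open>x < 1\<close> by (intro mult_nonneg_nonpos) auto
  then show "mrc_rate A c x \<le> x * C"
    using mrc_rate_minus_linear[of x A c C] \<open>x < 1\<close> by linarith
qed

lemma mrc_rate_stationary_max: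
  fixes A c E x\<^sub>2 :: real
  assumes "0 < A" "0 < c" "A < E" and stationary: "ln E + (A - c) / E = ln A + 1"
    and x\<^sub>2_def: "x\<^sub>2 = (E - A) / (E + c - A)"
  shows "0 < x\<^sub>2" "x\<^sub>2 < 1"
    and "\<And>y. 0 < y \<Longrightarrow> y < 1 \<Longrightarrow> mrc_rate A c y \<le> mrc_rate A c x\<^sub>2"
    and "\<And>x y. x\<^sub>2 \<le> x \<Longrightarrow> x \<le> y \<Longrightarrow> y < 1 \<Longrightarrow> mrc_rate A c y \<le> mrc_rate A c x"
proof -
  show x\<^sub>2: "0 < x\<^sub>2" "x\<^sub>2 < 1" using assms by (simp_all add: x\<^sub>2_def)
  have den: "0 < E + c - A" using assms by simp
  then have "1 - x\<^sub>2 = c / (E + c - A)" by (simp add: x\<^sub>2_def field_simps)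
  then have "c * x\<^sub>2 / (1 - x\<^sub>2) = E - A" using den assms(2) by (simp add: x\<^sub>2_def)
  then have E: "E = A + c * x\<^sub>2 / (1 - x\<^sub>2)" by simp
  show "mrc_rate A c y \<le> mrc_rate A c x\<^sub>2" if "0 < y" "y < 1" for y
    using mrc_rate_supergradient[OF _ _ x\<^sub>2 that E] stationary assms by simp
  fix x y assume xy: "x\<^sub>2 \<le> x" "x \<le> y" "y < 1"
  define u where "u = A + c * x / (1 - x)"
  have "E \<le> u"
    using divide_one_minus_mono[of x\<^sub>2 x] xy assms(2) unfolding E u_def
    by (simp add: mult_left_mono times_divide_eq_right[symmetric] del: times_divide_eq_right)
  then have "ln A + 1 - (ln u + (A - c) / u) \<le> 0"
    using ln_add_divide_mono[of E u "A - c"] stationary assms by simp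
  then have "(ln A + 1 - (ln u + (A - c) / u)) * (y - x) \<le> 0"
    using xy by (simp add: mult_nonpos_nonneg)
  moreover have "0 < x" using x\<^sub>2 xy by simp
  moreover have "mrc_rate A c y \<le> mrc_rate A c x + (ln A + 1 - (ln u + (A - c) / u)) * (y - x)"
    using \<open>0 < x\<close> xy assms(1,2) by (intro mrc_rate_supergradient[OF _ _ _ _ _ _ u_def]) auto
  ultimately show "mrc_rate A c y \<le> mrc_rate A c x" by simp
qed

lemma max_min_rate_optimal:
  fixes A C c W E x\<^sub>1 x\<^sub>2 :: real
  assumes "1 < A" "ln A < C" "0 < c"
    and W_def: "W = lambertWm1 (- ((C - ln A) / c) * exp (- ((C - ln A) * A / c)))"
    and x\<^sub>1_def: "x\<^sub>1 = (- (1 / (C - ln A)) * W - A / c) / (1 - (1 / (C - ln A)) * W - A / c)"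
    and E_def: "E = exp (lambertW0 ((c - A) / exp (1 + ln A)) + ln A + 1)"
    and x\<^sub>2_def: "x\<^sub>2 = (E - A) / (E + c - A)"
  shows "0 < max x\<^sub>1 x\<^sub>2 \<and> max x\<^sub>1 x\<^sub>2 < 1 \<and>
    (\<forall>x. 0 < x \<and> x < 1 \<longrightarrow>
      min (x * C) (mrc_rate A c x) \<le> min (max x\<^sub>1 x\<^sub>2 * C) (mrc_rate A c (max x\<^sub>1 x\<^sub>2)))"
proof -
  have "0 < A" "0 \<le> C" using assms(1,2) ln_gt_zero[OF assms(1)] by linarith+
  note x\<^sub>1 = mrc_rate_crossing_point[OF assms(1-3) W_def x\<^sub>1_def]
  note E = lambertW0_solves_ln_add_divide[OF \<open>0 < A\<close> assms(3) E_def]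
  note x\<^sub>2 = mrc_rate_stationary_max[OF \<open>0 < A\<close> assms(3) E x\<^sub>2_def]
  show ?thesis
    using max_min_linear_unimodal[OF \<open>0 \<le> C\<close> x\<^sub>1(1,2) x\<^sub>2(2) x\<^sub>1(3,4) x\<^sub>2(3,4)]
      x\<^sub>1(1,2) x\<^sub>2(1,2)
    by auto
qed

lemma power_splitting_rate_gt_direct_rate:
  fixes P_S H_SR H_SD \<sigma>a2 \<sigma>b2 \<sigma>D2 \<rho> :: real
  assumes "0 < P_S" "0 < H_SD" "0 < \<sigma>a2" "0 < \<sigma>b2" "\<sigma>D2 = \<sigma>a2 + \<sigma>b2" "H_SD < H_SR"
    and "\<rho> < 1 - (H_SD * \<sigma>b2) / (H_SR * \<sigma>D2 - H_SD * \<sigma>a2)"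
  shows "ln (1 + P_S * H_SD / \<sigma>D2) < ln (1 + (1 - \<rho>) * P_S * H_SR / ((1 - \<rho>) * \<sigma>a2 + \<sigma>b2))"
proof -
  have "0 < \<sigma>D2" using assms by simp
  have "H_SD * \<sigma>a2 < H_SD * \<sigma>D2" using assms by simp
  also have "\<dots> < H_SR * \<sigma>D2" using assms \<open>0 < \<sigma>D2\<close> by simp
  finally have X: "0 < H_SR * \<sigma>D2 - H_SD * \<sigma>a2" by simp
  then have "0 < (H_SD * \<sigma>b2) / (H_SR * \<sigma>D2 - H_SD * \<sigma>a2)" using assms by simp
  then have "0 < 1 - \<rho>" using assms by linarith
  have "(H_SD * \<sigma>b2) / (H_SR * \<sigma>D2 - H_SD * \<sigma>a2) < 1 - \<rho>" using assms(7) by linarith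
  then have "H_SD * \<sigma>b2 < (1 - \<rho>) * (H_SR * \<sigma>D2 - H_SD * \<sigma>a2)"
    using X by (simp add: pos_divide_less_eq)
  then have "H_SD * ((1 - \<rho>) * \<sigma>a2 + \<sigma>b2) < (1 - \<rho>) * H_SR * \<sigma>D2"
    by (simp add: algebra_simps)
  moreover have "0 < (1 - \<rho>) * \<sigma>a2 + \<sigma>b2" using \<open>0 < 1 - \<rho>\<close> assms by (simp add: add_pos_pos)
  ultimately have ratio: "H_SD / \<sigma>D2 < (1 - \<rho>) * H_SR / ((1 - \<rho>) * \<sigma>a2 + \<sigma>b2)"
    using \<open>0 < \<sigma>D2\<close> by (simp add: divide_simps mult.commute)
  have "P_S * H_SD / \<sigma>D2 < (1 - \<rho>) * P_S * H_SR / ((1 - \<rho>) * \<sigma>a2 + \<sigma>b2)"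
    using mult_strict_left_mono[OF ratio assms(1)] by (simp add: ac_simps)
  moreover have "0 < P_S * H_SD / \<sigma>D2" using assms \<open>0 < \<sigma>D2\<close> by simp
  ultimately show ?thesis by simp
qed

theorem corollary2:
  fixes P_S H_SR H_SD H_RD \<sigma>a2 \<sigma>b2 \<sigma>R2 \<sigma>D2 \<eta> \<rho> :: real
  assumes "P_S > 0" "H_SR > 0" "H_SD > 0" "H_RD > 0" "\<sigma>a2 > 0" "\<sigma>b2 > 0"
    and "0 < \<eta>" "\<eta> \<le> 1"
    and "\<sigma>R2 = \<sigma>a2 + \<sigma>b2" "\<sigma>D2 = \<sigma>a2 + \<sigma>b2"
    and "H_SR > H_SD"
    and "0 < \<rho>" "\<rho> < 1 - (H_SD * \<sigma>b2) / (H_SR * \<sigma>D2 - H_SD * \<sigma>a2)"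
  shows
    "let C_SR = ln (1 + (1 - \<rho>) * P_S * H_SR / ((1 - \<rho>) * \<sigma>a2 + \<sigma>b2));
         m = P_S * H_SD / \<sigma>D2;
         b = ln (1 + m);
         a' = C_SR - b;
         c' = \<eta> * \<rho> * H_SR * H_RD * P_S / \<sigma>D2;
         f = (\<lambda>x::real. min (x * C_SR)
                 (x * b + (1 - x) * ln (1 + m + c' * x / (1 - x))));
         Wl = lambertWm1 (- (a' / c') * exp (- (a' * (1 + m) / c')));
         lam1 = (- (1 / a') * Wl - (1 + m) / c') / (1 - (1 / a') * Wl - (1 + m) / c');
         E = exp (lambertW0 ((c' - (1 + m)) / exp (1 + b)) + b + 1);
         lam2 = (E - (1 + m)) / (E + c' - (1 + m));
         lamS = max lam1 lam2
     in 0 < lamS \<and> lamS < 1 \<and> (\<forall>lam. 0 < lam \<and> lam < 1 \<longrightarrow> f lam \<le> f lamS)"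
proof -
  define C_SR where "C_SR = ln (1 + (1 - \<rho>) * P_S * H_SR / ((1 - \<rho>) * \<sigma>a2 + \<sigma>b2))"
  define m where "m = P_S * H_SD / \<sigma>D2"
  define c' where "c' = \<eta> * \<rho> * H_SR * H_RD * P_S / \<sigma>D2"
  have "1 < 1 + m" "0 < c'" using assms by (simp_all add: m_def c'_def)
  moreover have "ln (1 + m) < C_SR"
    unfolding m_def C_SR_def using assms by (intro power_splitting_rate_gt_direct_rate) auto
  ultimately show ?thesis
    using max_min_rate_optimal[of "1 + m" C_SR c', OF _ _ _ refl refl refl refl]
    unfolding Let_def C_SR_def[symmetric] m_def[symmetric] c'_def[symmetric] mrc_rate_def
    by simp
qed

end
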